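(* There exist constants $c,C>0$ such that for all integers $n\ge2$ and $k\in\mathbb{N}$ with $k\le n^{1/4}$, and all $z\in\mathbb{Z}^2$ with $\|z\|\ge5\sqrt n$, $$\Pr\big[R(n)\cap Q(z,k)\neq\emptyset\big]\le\frac{C}{\log n}\exp\Big(-c\frac{\|z\|^2}{n}\Big).$$
   Context: $S$ is simple symmetric random walk on $\mathbb{Z}^2$ started at $S(0)=0$ (law $\Pr$), $R(n)=\{S(0),\ldots,S(n)\}$. $\|\cdot\|$ is the Euclidean norm. For $z\in\mathbb{Z}^2$ and $k\in\mathbb{N}$, $Q(z,k)=\{z+(j,j'): -k\le j,j'\le k\}$ is the square of side length $2k+1$ centered at $z$. Logarithms are base $2$. *)

theory Defs
  imports "HOL-Probability.Probability"
begin

definition srw_steps :: "(int \<times> int) set" where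
  "srw_steps = {(1,0), (-1,0), (0,1), (0,-1)}"

text \<open>Step sequences of length n; the law of the first n steps of SRW is uniform on them.\<close>
definition step_seqs :: "nat \<Rightarrow> (int \<times> int) list set" where
  "step_seqs n = {xs. length xs = n \<and> set xs \<subseteq> srw_steps}"

definition srw_law :: "nat \<Rightarrow> (int \<times> int) list pmf" where
  "srw_law n = pmf_of_set (step_seqs n)"

definition walk_pos :: "(int \<times> int) list \<Rightarrow> nat \<Rightarrow> int \<times> int" where
  "walk_pos xs m = (sum_list (map fst (take m xs)), sum_list (map snd (take m xs)))"

definition walk_range :: "(int \<times> int) list \<Rightarrow> nat \<Rightarrow> (int \<times> int) set" where
  "walk_range xs n = {walk_pos xs m | m. m \<le> n}"

definition square :: "int \<times> int \<Rightarrow> nat \<Rightarrow> (int \<times> int) set" where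
  "square z k = {(fst z + j, snd z + j') | j j'.
      - int k \<le> j \<and> j \<le> int k \<and> - int k \<le> j' \<and> j' \<le> int k}"

definition znorm :: "int \<times> int \<Rightarrow> real" where
  "znorm z = sqrt (real_of_int (fst z) ^ 2 + real_of_int (snd z) ^ 2)"

end

theory Submission
  imports Defs
begin

(* Let Q = Q(z,k) with k^4 <= n and |z| >= 5 sqrt n, let h_n(x) be the probability that
   the walk started at x visits Q within n steps, and G_n(x) the expected number of visits
   to Q at times 0..n.  The proof is elementary and compares visit counts:

   1. Local limit estimates.  In the coordinates (a+b, a-b) the walk is a pair of independent
      Bin(m,1/2) variables, so P[S(m) = y] is a product of two binomial probabilities.  The
      central binomial coefficient then gives P[S(m) = y] <= 4/(m+1) exp(-|y|^2/(4(m+1)))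
      and, for 8|y|^2 <= m and the right parity, P[S(m) = y] >= 1/(8(m+1)).
   2. Stopping at the first visit to Q:  h_n(0) * min_{y in Q} G_n(y) <= G_{2n}(0).
   3. From any y in Q the walk makes at least |Q| ln n / 64 expected visits to Q by time n
      (a harmonic sum over the times after 64 k^2), while every point of Q has norm at least
      0.7|z|, so G_{2n}(0) <= 12 |Q| exp(-|z|^2/(72 n)).  Hence for n >= 66^4,
      h_n(0) ln n <= 768 exp(-|z|^2/(72 n)).
   4. For n < 66^4 the bound holds with a large constant, as h_n(0) = 0 unless |z| <= 3n.
   Counting step sequences identifies the probability of the theorem with h_n(0), and the
   theorem follows with c = 1/72. *)

section \<open>Binomial probabilities with parameter 1/2\<close>

definition bin_half :: "nat \<Rightarrow> int \<Rightarrow> real" where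
  "bin_half j i = (if 0 \<le> i \<and> i \<le> int j then real (j choose nat i) / 2^j else 0)"

lemma bin_half_nonneg: "bin_half j i \<ge> 0"
  by (simp add: bin_half_def)

lemma bin_half_0: "bin_half 0 i = (if i = 0 then 1 else 0)"
  by (auto simp: bin_half_def)

lemma bin_half_Suc: "bin_half (Suc j) i = (bin_half j i + bin_half j (i - 1)) / 2"
proof -
  consider "i < 0" | "i = 0" | "0 < i \<and> i \<le> int j" | "i = int j + 1" | "i > int j + 1"
    by linarith
  then show ?thesis
  proof cases
    case 3
    define l where "l = nat (i - 1)"
    have l: "i = int (Suc l)" "l < j" using 3 by (auto simp: l_def)
    have n1: "nat i = Suc l" "nat (i - 1) = l" using l by auto
    have "bin_half (Suc j) i = real (Suc j choose Suc l) / 2^Suc j"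
      using 3 n1 by (simp add: bin_half_def)
    also have "\<dots> = (real (j choose l) + real (j choose Suc l)) / 2^Suc j" by simp
    also have "\<dots> = (real (j choose Suc l) / 2^j + real (j choose l) / 2^j) / 2"
      by (simp add: field_simps)
    also have "real (j choose Suc l) / 2^j = bin_half j i" using 3 n1 by (simp add: bin_half_def)
    also have "real (j choose l) / 2^j = bin_half j (i - 1)" using 3 n1 by (simp add: bin_half_def)
    finally show ?thesis .
  next
    case 4
    have n1: "nat i = Suc j" "nat (i - 1) = j" using 4 by auto
    then show ?thesis using 4 by (simp add: bin_half_def)
  qed (simp_all add: bin_half_def)
qed

lemma bin_half_sym: "bin_half j (int j - i) = bin_half j i"
proof (cases "0 \<le> i \<and> i \<le> int j")
  case True
  then obtain l where l: "i = int l" "l \<le> j" by (metis nat_eq_iff nat_le_iff)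
  have "nat (int j - i) = j - l" using l by auto
  moreover have "j choose (j - l) = j choose l" using l(2) by (rule binomial_symmetric[symmetric])
  ultimately show ?thesis using True l by (simp add: bin_half_def)
qed (auto simp: bin_half_def)

lemma bin_half_ratio:
  assumes "0 \<le> i" "i < int j"
  shows "bin_half j (i + 1) = bin_half j i * ((real j - real_of_int i) / (real_of_int i + 1))"
proof -
  obtain l where l: "i = int l" using assms by (metis nonneg_int_cases)
  have "(j choose Suc l) * Suc l = (j choose l) * (j - l)"
    by (metis binomial_absorb_comp binomial_absorption mult.commute)
  hence "real ((j choose Suc l) * Suc l) = real ((j choose l) * (j - l))" by simp
  hence eq: "real (j choose Suc l) * (real l + 1) = real (j choose l) * (real j - real l)"
    using assms l by (simp add: algebra_simps)
  have "nat (i + 1) = Suc l" "nat i = l" using l by auto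
  hence e1: "bin_half j (i + 1) = real (j choose Suc l) / 2^j"
    and e2: "bin_half j i = real (j choose l) / 2^j"
    using assms l by (auto simp: bin_half_def)
  have e3: "real_of_int i + 1 = real l + 1" and e4: "real j - real_of_int i = real j - real l"
    using l by auto
  have frac: "X / c = Y / c * (a / b)" if "X * b = Y * a" "b > 0" "c > 0" for X Y a b c :: real
    using that by (simp add: field_simps)
  show ?thesis unfolding e1 e2 e3 e4 by (rule frac[OF eq]) simp_all
qed

definition central_binom :: "nat \<Rightarrow> real" where
  "central_binom p = real (2*p choose p) / 4^p"

lemma central_binom_Suc:
  "central_binom (Suc p) = central_binom p * ((2 * real p + 1) / (2 * real p + 2))"
proof -
  have a: "Suc p * (Suc (Suc (2*p)) choose Suc p) = Suc (Suc (2*p)) * (Suc (2*p) choose p)"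
    and b: "Suc p * (Suc (2*p) choose Suc p) = Suc (2*p) * (2*p choose p)"
    by (rule Suc_times_binomial)+
  have c: "Suc (2*p) choose Suc p = Suc (2*p) choose p"
    using binomial_symmetric[of p "Suc (2*p)"] by simp
  have 2: "2 * Suc p = Suc (Suc (2*p))" by simp
  have "Suc p * (Suc p * (2 * Suc p choose Suc p))
      = Suc p * (Suc (Suc (2*p)) * (Suc (2*p) choose Suc p))"
    unfolding 2 a c by simp
  also have "\<dots> = Suc p * (2 * (Suc (2*p) * (2*p choose p)))"
    unfolding b[symmetric] by simp
  finally have "Suc p * (2 * Suc p choose Suc p) = 2 * (Suc (2*p) * (2*p choose p))"
    by (metis mult_left_cancel nat.distinct(1))
  hence "real (Suc p * (2 * Suc p choose Suc p)) = real (2 * (Suc (2*p) * (2*p choose p)))"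
    by (rule arg_cong)
  hence e: "real (2 * Suc p choose Suc p) * (real p + 1) = 2 * (2 * real p + 1) * real (2*p choose p)"
    by (simp only: of_nat_mult of_nat_Suc) (simp only: algebra_simps of_nat_numeral)
  have alg: "X / 4^Suc p = Y / 4^p * ((2 * real p + 1) / (2 * real p + 2))"
    if h: "X * (real p + 1) = 2 * (2 * real p + 1) * Y" for X Y :: real
  proof -
    have "X / 4^Suc p = X * (real p + 1) / (4^Suc p * (real p + 1))" by simp
    also have "\<dots> = 2 * (2 * real p + 1) * Y / (4^Suc p * (real p + 1))" unfolding h ..
    also have "\<dots> = Y / 4^p * ((2 * real p + 1) / (2 * real p + 2))"
      by (simp add: divide_simps) (simp add: algebra_simps)
    finally show ?thesis .
  qed
  show ?thesis unfolding central_binom_def by (rule alg[OF e])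
qed

lemma central_binom_sq_upper: "central_binom p ^ 2 \<le> 1 / (3 * real p + 1)"
proof (induction p)
  case 0 then show ?case by (simp add: central_binom_def)
next
  case (Suc p)
  have poly: "(2 * real p + 1)^2 * (3 * real p + 4) \<le> (2 * real p + 2)^2 * (3 * real p + 1)"
    by (simp add: power2_eq_square algebra_simps)
  have "central_binom (Suc p) ^ 2 = central_binom p ^ 2 * ((2 * real p + 1)^2 / (2 * real p + 2)^2)"
    by (simp add: central_binom_Suc power_mult_distrib power_divide)
  also have "\<dots> \<le> 1 / (3 * real p + 1) * ((2 * real p + 1)^2 / (2 * real p + 2)^2)"
    by (rule mult_right_mono[OF Suc.IH]) simp
  also have "\<dots> \<le> 1 / (3 * real (Suc p) + 1)"
    using poly by (simp add: divide_simps) (simp add: algebra_simps)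
  finally show ?case .
qed

lemma central_binom_sq_lower: "p \<ge> 1 \<Longrightarrow> central_binom p ^ 2 \<ge> 1 / (4 * real p)"
proof (induction p rule: dec_induct)
  case base
  show ?case by (simp add: central_binom_def power2_eq_square)
next
  case (step p)
  have poly: "(2 * real p + 1)^2 * (real p + 1) \<ge> real p * (2 * real p + 2)^2"
    by (simp add: power2_eq_square algebra_simps)
  have "1 / (4 * real (Suc p)) \<le> 1 / (4 * real p) * ((2 * real p + 1)^2 / (2 * real p + 2)^2)"
    using poly step.hyps by (simp add: divide_simps) (simp add: algebra_simps)
  also have "\<dots> \<le> central_binom p ^ 2 * ((2 * real p + 1)^2 / (2 * real p + 2)^2)"
    by (rule mult_right_mono[OF step.IH]) simp
  also have "\<dots> = central_binom (Suc p) ^ 2"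
    by (simp add: central_binom_Suc power_mult_distrib power_divide)
  finally show ?case .
qed

section \<open>Gaussian bounds for Bin(j,1/2)\<close>

text \<open>The middle point of Bin(j,1/2) (the larger of the two modes when j is odd)
  and the maximal probability attained there.\<close>
abbreviation bin_mid :: "nat \<Rightarrow> int" where
  "bin_mid j \<equiv> (int j + 1) div 2"

definition bin_half_max :: "nat \<Rightarrow> real" where
  "bin_half_max j = bin_half j (bin_mid j)"

lemma bin_mid_bounds: "2 * bin_mid j \<ge> int j" "2 * bin_mid j \<le> int j + 1" "bin_mid j \<ge> 0"
  by presburger+

lemma bin_half_max_nonneg: "bin_half_max j \<ge> 0"
  by (simp add: bin_half_max_def bin_half_nonneg)

text \<open>For odd j = 2p+1 the mode probability equals that of the even j+1, by Pascal's rule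
  and symmetry; hence it is always a central binomial probability.\<close>
lemma bin_half_max_central: "bin_half_max j = central_binom ((j + 1) div 2)"
proof (cases "even j")
  case True
  then obtain p where p: "j = 2*p" by blast
  have "(2::real)^(2*p) = 4^p" by (simp add: power_mult)
  then show ?thesis using p by (simp add: bin_half_max_def bin_half_def central_binom_def)
next
  case False
  then obtain p where p: "j = 2*p+1" using oddE by blast
  have "bin_half j (int p) = bin_half j (int p + 1)"
    using bin_half_sym[of j "int p"] p by simp
  hence "bin_half j (int p + 1) = bin_half (Suc j) (int p + 1)"
    by (simp add: bin_half_Suc)
  also have "\<dots> = central_binom (Suc p)"
  proof -
    have "(2::real)^(2*Suc p) = 4^Suc p" by (simp add: power_mult)
    moreover have "nat (int p + 1) = Suc p" by simp
    ultimately show ?thesis using p by (simp add: bin_half_def central_binom_def)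
  qed
  moreover have "bin_mid j = int p + 1" "(j + 1) div 2 = Suc p" using p by simp_all
  ultimately show ?thesis unfolding bin_half_max_def by simp
qed

lemma bin_half_max_sq_upper: "bin_half_max j ^ 2 \<le> 1 / (real j + 1)"
proof -
  have "2 * ((j+1) div 2) \<ge> j" by presburger
  hence "2 * real ((j+1) div 2) \<ge> real j" by linarith
  hence "1 / (3 * real ((j + 1) div 2) + 1) \<le> 1 / (real j + 1)"
    by (simp add: divide_simps)
  with central_binom_sq_upper show ?thesis
    unfolding bin_half_max_central by (rule order_trans)
qed

lemma bin_half_max_sq_lower: "bin_half_max j ^ 2 \<ge> 1 / (2 * (real j + 1))"
proof (cases "j = 0")
  case True then show ?thesis by (simp add: bin_half_max_central central_binom_def)
next
  case False
  hence p1: "(j + 1) div 2 \<ge> 1" by presburger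
  have "2 * ((j+1) div 2) \<le> j + 1" by presburger
  hence "2 * real ((j+1) div 2) \<le> real j + 1" by linarith
  hence "1 / (2 * (real j + 1)) \<le> 1 / (4 * real ((j + 1) div 2))"
    using p1 by (simp add: divide_simps)
  also have "\<dots> \<le> bin_half_max j ^ 2"
    unfolding bin_half_max_central by (rule central_binom_sq_lower[OF p1])
  finally show ?thesis .
qed

text \<open>Decay to the right of the middle: each step to the right multiplies the probability
  by at most exp(-(2t+1)/(j+1)), which telescopes to a Gaussian factor.\<close>
lemma bin_half_decay_right:
  "bin_half j (bin_mid j + int t) \<le> bin_half_max j * exp (- (real t ^ 2) / (real j + 1))"
proof (induction t)
  case 0 then show ?case by (simp add: bin_half_max_def)
next
  case (Suc t)
  define i where "i = bin_mid j + int t"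
  have ib: "2 * i \<ge> int j + 2 * int t" "i \<ge> 0" using bin_mid_bounds[of j] by (auto simp: i_def)
  have IH: "bin_half j i \<le> bin_half_max j * exp (- (real t ^ 2) / (real j + 1))"
    using Suc.IH by (simp add: i_def)
  have eq: "bin_mid j + int (Suc t) = i + 1" by (simp add: i_def)
  show ?case
  proof (cases "i < int j")
    case False
    hence "bin_half j (i + 1) = 0" by (simp add: bin_half_def)
    then show ?thesis unfolding eq using bin_half_max_nonneg[of j] by simp
  next
    case True
    define E where "E = exp (- (2 * real t + 1) / (real j + 1))"
    have "1 + (- (2 * real t + 1) / (real j + 1)) \<le> E"
      unfolding E_def by (rule exp_ge_add_one_self)
    hence E1: "1 - (2 * real t + 1) / (real j + 1) \<le> E"
      using minus_divide_left[of "2 * real t + 1" "real j + 1"] by linarith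
    have Ri: "real_of_int i + 1 \<le> real j" "2 * real_of_int i \<ge> real j + 2 * real t"
        "real_of_int i \<ge> 0"
      using True ib by linarith+
    have "(real_of_int i + 1) * (2 * real t + 1) / (real j + 1) \<le> 2 * real t + 1"
      using Ri by (simp add: divide_simps)
    hence "real j - real_of_int i \<le> (real_of_int i + 1) * (1 - (2 * real t + 1) / (real j + 1))"
      using Ri by (simp add: algebra_simps)
    also have "\<dots> \<le> (real_of_int i + 1) * E" using E1 Ri by (intro mult_left_mono) auto
    finally have r: "(real j - real_of_int i) / (real_of_int i + 1) \<le> E"
      using Ri by (simp add: divide_simps mult.commute)
    have "bin_half j (i + 1) = bin_half j i * ((real j - real_of_int i) / (real_of_int i + 1))"
      using bin_half_ratio[OF ib(2) True] .
    also have "\<dots> \<le> bin_half j i * E" using r bin_half_nonneg[of j i] by (rule mult_left_mono)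
    also have "\<dots> \<le> bin_half_max j * exp (- (real t ^ 2) / (real j + 1)) * E"
      using IH by (rule mult_right_mono) (simp add: E_def)
    also have "\<dots> = bin_half_max j * exp (- (real (Suc t) ^ 2) / (real j + 1))"
    proof -
      have "- (real t ^ 2) / (real j + 1) + - (2 * real t + 1) / (real j + 1)
          = - (real (Suc t) ^ 2) / (real j + 1)"
        by (simp add: add_divide_distrib[symmetric] power2_eq_square algebra_simps)
      thus ?thesis unfolding E_def mult.assoc exp_add[symmetric] by simp
    qed
    finally show ?thesis unfolding eq .
  qed
qed

lemma bin_half_flat_right:
  "bin_mid j + int t \<le> int j \<Longrightarrow>
   bin_half j (bin_mid j + int t) \<ge> bin_half_max j * (1 - 4 * real t * (real t + 1) / (real j + 2))"
proof (induction t)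
  case 0 then show ?case by (simp add: bin_half_max_def)
next
  case (Suc t)
  define i where "i = bin_mid j + int t"
  have ib: "2 * i \<ge> int j + 2 * int t" "2 * i \<le> int j + 1 + 2 * int t" "i \<ge> 0"
    using bin_mid_bounds[of j] by (auto simp: i_def)
  have eq: "bin_mid j + int (Suc t) = i + 1" by (simp add: i_def)
  have lt: "i < int j" using Suc.prems eq by simp
  define a where "a = 4 * real t * (real t + 1) / (real j + 2)"
  define x where "x = 4 * (real t + 1) / (real j + 2)"
  define r where "r = (real j - real_of_int i) / (real_of_int i + 1)"
  have IH: "bin_half j i \<ge> bin_half_max j * (1 - a)"
    using Suc.IH lt by (simp add: i_def a_def)
  have Ri: "real_of_int i + 1 \<le> real j" "2 * real_of_int i \<ge> real j + 2 * real t"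
     "2 * real_of_int i \<le> real j + 1 + 2 * real t" "real_of_int i \<ge> 0"
    using lt ib by linarith+
  have a0: "a \<ge> 0" and x0: "x \<ge> 0" by (simp_all add: a_def x_def)
  have r0: "r \<ge> 0" and r1: "r \<le> 1" using Ri by (simp_all add: r_def divide_simps)
  have "2 * real_of_int i + 1 - real j \<le> 2 * (real t + 1)" using Ri by simp
  also have "\<dots> \<le> 4 * (real t + 1) * (real_of_int i + 1) / (real j + 2)"
  proof -
    have "(2 * (real t + 1)) * (real j + 2) \<le> (2 * (real t + 1)) * (2 * (real_of_int i + 1))"
      using Ri by (intro mult_left_mono) auto
    thus ?thesis by (simp add: divide_simps algebra_simps)
  qed
  finally have "real j - real_of_int i \<ge> (real_of_int i + 1) * (1 - x)"
    unfolding x_def by (simp add: algebra_simps)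
  hence "r \<ge> 1 - x" using Ri by (simp add: r_def divide_simps mult.commute)
  hence key: "(1 - a) * r \<ge> 1 - a - x"
  proof (cases "1 - a \<ge> 0")
    case True
    have "(1 - a) * r \<ge> (1 - a) * (1 - x)" using \<open>r \<ge> 1 - x\<close> True by (rule mult_left_mono)
    moreover have "(1 - a) * (1 - x) \<ge> 1 - a - x" using a0 x0 by (simp add: algebra_simps)
    ultimately show ?thesis by linarith
  next
    case False
    have "(1 - a) * r \<ge> (1 - a) * 1" using False r1 by (intro mult_left_mono_neg) auto
    then show ?thesis using x0 by simp
  qed
  have "bin_half j (i + 1) = bin_half j i * r" unfolding r_def using bin_half_ratio[OF ib(3) lt] .
  also have "\<dots> \<ge> bin_half_max j * ((1 - a) * r)"
    using mult_right_mono[OF IH r0] by (simp add: mult.assoc)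
  finally have "bin_half j (i + 1) \<ge> bin_half_max j * (1 - a - x)"
    using mult_left_mono[OF key bin_half_max_nonneg[of j]] by linarith
  moreover have "a + x \<le> 4 * real (Suc t) * (real (Suc t) + 1) / (real j + 2)"
    unfolding a_def x_def by (simp add: add_divide_distrib[symmetric] divide_right_mono algebra_simps)
  hence "bin_half_max j * (1 - 4 * real (Suc t) * (real (Suc t) + 1) / (real j + 2))
      \<le> bin_half_max j * (1 - a - x)"
    by (intro mult_left_mono bin_half_max_nonneg) linarith
  ultimately show ?case unfolding eq by linarith
qed

lemma bin_half_gauss_right:
  assumes "i \<ge> bin_mid j"
  shows "bin_half j i \<le> 2 * bin_half_max j * exp (- ((2 * real_of_int i - real j) ^ 2) / (8 * (real j + 1)))"
proof -
  define t where "t = nat (i - bin_mid j)"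
  have it: "i = bin_mid j + int t" using assms by (simp add: t_def)
  define s where "s = 2 * real_of_int i - real j"
  have s0: "s \<ge> 0" and ts: "2 * real t \<ge> s - 1"
    using bin_mid_bounds[of j] it by (simp_all add: s_def)
  have tt: "real t ^ 2 \<ge> s ^ 2 / 8 - 1/4"
  proof (cases "s \<le> 1")
    case True
    have "s ^ 2 \<le> 1" using True s0 by (simp add: power_le_one)
    moreover have "real t ^ 2 \<ge> 0" by simp
    ultimately show ?thesis by linarith
  next
    case False
    hence "real t ^ 2 \<ge> ((s - 1) / 2) ^ 2" using ts by (intro power_mono) auto
    moreover have "((s - 1) / 2) ^ 2 - (s ^ 2 / 8 - 1/4) = (s - 2) ^ 2 / 8"
      by (simp add: power2_eq_square field_simps)
    ultimately show ?thesis by (smt (verit) zero_le_power2 divide_nonneg_pos)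
  qed
  have j1: "real j + 1 \<ge> 1" by simp
  have "- (real t ^ 2) / (real j + 1) \<le> - (s ^ 2 / 8 - 1/4) / (real j + 1)"
    using tt by (intro divide_right_mono) auto
  also have "\<dots> = - (s ^ 2) / (8 * (real j + 1)) + 1 / (4 * (real j + 1))"
  proof -
    have "- (s ^ 2 / 8 - 1/4) / J = - (s ^ 2) / (8 * J) + 1 / (4 * J)" if "J > 0" for J :: real
      using that by (simp add: field_simps)
    thus ?thesis using j1 by simp
  qed
  also have "\<dots> \<le> - (s ^ 2) / (8 * (real j + 1)) + 1/2"
  proof -
    have "1 / (4 * (real j + 1)) \<le> 1/2" by (simp add: divide_simps)
    thus ?thesis by linarith
  qed
  finally have "exp (- (real t ^ 2) / (real j + 1)) \<le> exp (- (s ^ 2) / (8 * (real j + 1))) * exp (1/2)"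
    by (simp add: exp_add[symmetric])
  also have "\<dots> \<le> exp (- (s ^ 2) / (8 * (real j + 1))) * 2"
    by (intro mult_left_mono exp_half_le2) auto
  finally have "bin_half_max j * exp (- (real t ^ 2) / (real j + 1))
      \<le> bin_half_max j * (2 * exp (- (s ^ 2) / (8 * (real j + 1))))"
    by (intro mult_left_mono bin_half_max_nonneg) simp
  with bin_half_decay_right[of j t] show ?thesis
    unfolding it s_def by simp
qed

lemma bin_half_gauss:
  "bin_half j i \<le> 2 * bin_half_max j * exp (- ((2 * real_of_int i - real j) ^ 2) / (8 * (real j + 1)))"
proof (cases "i \<ge> bin_mid j")
  case True then show ?thesis by (rule bin_half_gauss_right)
next
  case False
  hence "int j - i \<ge> bin_mid j" using bin_mid_bounds[of j] by linarith
  from bin_half_gauss_right[OF this] bin_half_sym[of j i]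
  have "bin_half j i \<le> 2 * bin_half_max j *
      exp (- ((2 * real_of_int (int j - i) - real j) ^ 2) / (8 * (real j + 1)))" by simp
  moreover have "(2 * real_of_int (int j - i) - real j) ^ 2 = (2 * real_of_int i - real j) ^ 2"
    by (simp add: power2_eq_square algebra_simps)
  ultimately show ?thesis by simp
qed

lemma bin_half_near_mid_right:
  assumes "i \<ge> bin_mid j" "4 * (2 * i - int j) ^ 2 \<le> int j"
  shows "bin_half j i \<ge> bin_half_max j / 2"
proof -
  define t where "t = nat (i - bin_mid j)"
  have it: "i = bin_mid j + int t" using assms by (simp add: t_def)
  define s where "s = 2 * i - int j"
  have s0: "s \<ge> 0" and ts: "2 * int t \<le> s"
    using bin_mid_bounds[of j] it by (simp_all add: s_def)
  have ss: "s \<le> s ^ 2" using s0 by (cases "s = 0") (auto simp: power2_eq_square)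
  have sj: "4 * s ^ 2 \<le> int j" using assms(2) by (simp add: s_def)
  have ij: "i \<le> int j" using ss sj s0 by (simp add: s_def)
  have "(2 * int t) * (2 * int t + 2) \<le> s * (s + 2)"
    using ts s0 by (intro mult_mono) auto
  moreover have "s * (s + 2) \<le> 2 * s ^ 2 + 1"
    using zero_le_power2[of "s - 1"] by (simp add: power2_eq_square algebra_simps)
  ultimately have "8 * int t * (int t + 1) \<le> int j + 2" using sj by (simp add: algebra_simps)
  hence "real_of_int (8 * int t * (int t + 1)) \<le> real_of_int (int j + 2)"
    by (simp only: of_int_le_iff)
  hence "8 * real t * (real t + 1) \<le> real j + 2" by simp
  hence "1 - 4 * real t * (real t + 1) / (real j + 2) \<ge> 1/2"
    by (simp add: divide_simps)
  hence "bin_half_max j * (1 - 4 * real t * (real t + 1) / (real j + 2)) \<ge> bin_half_max j * (1/2)"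
    using bin_half_max_nonneg by (intro mult_left_mono) auto
  moreover have "bin_half j i \<ge> bin_half_max j * (1 - 4 * real t * (real t + 1) / (real j + 2))"
    using bin_half_flat_right[of j t] ij it by simp
  ultimately show ?thesis by linarith
qed

lemma bin_half_near_mid:
  assumes "4 * (2 * i - int j) ^ 2 \<le> int j"
  shows "bin_half j i \<ge> bin_half_max j / 2"
proof (cases "i \<ge> bin_mid j")
  case True then show ?thesis using assms by (rule bin_half_near_mid_right)
next
  case False
  hence "int j - i \<ge> bin_mid j" using bin_mid_bounds[of j] by linarith
  moreover have "(2 * (int j - i) - int j) ^ 2 = (2 * i - int j) ^ 2"
    by (simp add: power2_eq_square algebra_simps)
  ultimately have "bin_half j (int j - i) \<ge> bin_half_max j / 2"
    using assms by (intro bin_half_near_mid_right) simp_all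
  then show ?thesis by (simp add: bin_half_sym)
qed

section \<open>The m-step transition probabilities of the walk\<close>

text \<open>\<open>walk_kernel m a b\<close> is P[S(m) = (a,b)].  In the rotated coordinates (a+b, a-b) the
  two components of the walk are independent simple walks, so S(m) = (a,b) iff two independent
  Bin(m,1/2) variables take the values (m+a+b)/2 and (m+a-b)/2.  The recursion
  \<open>walk_kernel_Suc\<close> below confirms that this is the transition kernel of the walk.\<close>
definition walk_kernel :: "nat \<Rightarrow> int \<Rightarrow> int \<Rightarrow> real" where
  "walk_kernel m a b = (if even (int m + a + b)
     then bin_half m ((int m + a + b) div 2) * bin_half m ((int m + a - b) div 2) else 0)"

lemma walk_kernel_nonneg: "walk_kernel m a b \<ge> 0"
  by (simp add: walk_kernel_def bin_half_nonneg)

lemma walk_kernel_0: "walk_kernel 0 a b = (if a = 0 \<and> b = 0 then 1 else 0)"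
proof (cases "a = 0 \<and> b = 0")
  case False
  hence "odd (a + b) \<or> (a + b) div 2 \<noteq> 0 \<or> (a - b) div 2 \<noteq> 0" by presburger
  then show ?thesis using False by (auto simp add: walk_kernel_def bin_half_0)
qed (simp add: walk_kernel_def bin_half_0)

lemma sum_srw_steps: "(\<Sum>e\<in>srw_steps. g e) = g (1,0) + g (-1,0) + g (0,1) + g (0,-1)"
  by (simp add: srw_steps_def add.assoc)

lemma walk_kernel_Suc:
  "walk_kernel (Suc m) a b = (\<Sum>e\<in>srw_steps. walk_kernel m (a - fst e) (b - snd e)) / 4"
proof (cases "even (int m + 1 + a + b)")
  case True
  define u where "u = (int m + 1 + a + b) div 2"
  define v where "v = (int m + 1 + a - b) div 2"
  have p: "even (int m + (a - 1) + b)" "even (int m + (a + 1) + b)"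
          "even (int m + a + (b - 1))" "even (int m + a + (b + 1))" using True by presburger+
  have d: "(int m + (a - 1) + b) div 2 = u - 1" "(int m + (a - 1) - b) div 2 = v - 1"
          "(int m + (a + 1) + b) div 2 = u" "(int m + (a + 1) - b) div 2 = v"
          "(int m + a + (b - 1)) div 2 = u - 1" "(int m + a - (b - 1)) div 2 = v"
          "(int m + a + (b + 1)) div 2 = u" "(int m + a - (b + 1)) div 2 = v - 1"
    using True unfolding u_def v_def by presburger+
  have e: "int (Suc m) + a + b = int m + 1 + a + b" "int (Suc m) + a - b = int m + 1 + a - b"
    by simp_all
  have L: "walk_kernel (Suc m) a b = bin_half (Suc m) u * bin_half (Suc m) v"
    unfolding walk_kernel_def e u_def[symmetric] v_def[symmetric] using True by simp
  have R: "(\<Sum>e\<in>srw_steps. walk_kernel m (a - fst e) (b - snd e)) =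
      bin_half m (u - 1) * bin_half m (v - 1) + bin_half m u * bin_half m v
      + bin_half m (u - 1) * bin_half m v + bin_half m u * bin_half m (v - 1)"
    unfolding sum_srw_steps using p d by (simp add: walk_kernel_def diff_minus_eq_add)
  show ?thesis unfolding L R bin_half_Suc by (simp add: field_simps)
next
  case False
  have p: "odd (int m + (a - 1) + b)" "odd (int m + (a + 1) + b)"
          "odd (int m + a + (b - 1))" "odd (int m + a + (b + 1))" using False by presburger+
  have "int (Suc m) + a + b = int m + 1 + a + b" by simp
  hence "walk_kernel (Suc m) a b = 0" unfolding walk_kernel_def using False by simp
  then show ?thesis unfolding sum_srw_steps using p by (simp add: walk_kernel_def diff_minus_eq_add)
qed

lemma walk_kernel_gauss:
  "walk_kernel m a b
     \<le> 4 / (real m + 1) * exp (- (real_of_int a ^ 2 + real_of_int b ^ 2) / (4 * (real m + 1)))"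
proof (cases "even (int m + a + b)")
  case False
  then show ?thesis by (simp add: walk_kernel_def)
next
  case True
  define u where "u = (int m + a + b) div 2"
  define v where "v = (int m + a - b) div 2"
  define A where "A = real_of_int a"
  define B where "B = real_of_int b"
  define K where "K = 8 * (real m + 1)"
  have "2 * u = int m + a + b" "2 * v = int m + a - b"
    using True unfolding u_def v_def by presburger+
  hence "real_of_int (2 * u) = real_of_int (int m + a + b)"
    "real_of_int (2 * v) = real_of_int (int m + a - b)" by simp_all
  hence uv: "2 * real_of_int u - real m = A + B" "2 * real_of_int v - real m = A - B"
    unfolding A_def B_def by simp_all
  have "walk_kernel m a b = bin_half m u * bin_half m v"
    using True by (simp add: walk_kernel_def u_def v_def)
  also have "\<dots> \<le> (2 * bin_half_max m * exp (- ((A + B) ^ 2) / K))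
                  * (2 * bin_half_max m * exp (- ((A - B) ^ 2) / K))"
    using bin_half_gauss[of m u] bin_half_gauss[of m v] unfolding uv K_def
    by (intro mult_mono) (auto simp: bin_half_nonneg bin_half_max_nonneg)
  also have "\<dots> = 4 * bin_half_max m ^ 2 * (exp (- ((A + B) ^ 2) / K) * exp (- ((A - B) ^ 2) / K))"
    by (simp add: power2_eq_square mult_ac)
  also have "exp (- ((A + B) ^ 2) / K) * exp (- ((A - B) ^ 2) / K)
      = exp (- ((A + B) ^ 2) / K + - ((A - B) ^ 2) / K)"
    by (rule exp_add[symmetric])
  also have "- ((A + B) ^ 2) / K + - ((A - B) ^ 2) / K = - (A ^ 2 + B ^ 2) / (4 * (real m + 1))"
  proof -
    have h: "- ((A + B) ^ 2) / (8 * M) + - ((A - B) ^ 2) / (8 * M) = - (A ^ 2 + B ^ 2) / (4 * M)"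
      if "M > 0" for M :: real
      using that by (simp add: field_simps power2_eq_square)
    show ?thesis unfolding K_def by (rule h) simp
  qed
  also have "4 * bin_half_max m ^ 2 * exp (- (A ^ 2 + B ^ 2) / (4 * (real m + 1)))
      \<le> 4 * (1 / (real m + 1)) * exp (- (A ^ 2 + B ^ 2) / (4 * (real m + 1)))"
    using bin_half_max_sq_upper[of m] by (intro mult_right_mono) auto
  finally show ?thesis by (simp add: A_def B_def)
qed

lemma walk_kernel_lower:
  assumes "even (int m + a + b)" "8 * (a ^ 2 + b ^ 2) \<le> int m"
  shows "walk_kernel m a b \<ge> 1 / (8 * (real m + 1))"
proof -
  define u where "u = (int m + a + b) div 2"
  define v where "v = (int m + a - b) div 2"
  have uv: "2 * u - int m = a + b" "2 * v - int m = a - b"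
    using assms(1) unfolding u_def v_def by presburger+
  have "(a + b) ^ 2 \<le> 2 * (a ^ 2 + b ^ 2)" "(a - b) ^ 2 \<le> 2 * (a ^ 2 + b ^ 2)"
    using zero_le_power2[of "a - b"] zero_le_power2[of "a + b"]
    by (simp_all add: power2_eq_square algebra_simps)
  hence "4 * (2 * u - int m) ^ 2 \<le> int m" "4 * (2 * v - int m) ^ 2 \<le> int m"
    using assms(2) unfolding uv by linarith+
  hence half: "bin_half m u \<ge> bin_half_max m / 2" "bin_half m v \<ge> bin_half_max m / 2"
    using bin_half_near_mid by blast+
  have "1 / (8 * (real m + 1)) = (1 / (2 * (real m + 1))) / 4" by simp
  also have "\<dots> \<le> bin_half_max m ^ 2 / 4"
    by (rule divide_right_mono[OF bin_half_max_sq_lower]) simp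
  also have "\<dots> = (bin_half_max m / 2) * (bin_half_max m / 2)" by (simp add: power2_eq_square)
  also have "\<dots> \<le> bin_half m u * bin_half m v"
    using half bin_half_max_nonneg[of m] by (intro mult_mono) auto
  also have "\<dots> = walk_kernel m a b" using assms(1) by (simp add: walk_kernel_def u_def v_def)
  finally show ?thesis .
qed

section \<open>Hitting probabilities and expected numbers of visits\<close>

fun hit_prob :: "(int \<times> int) set \<Rightarrow> nat \<Rightarrow> int \<times> int \<Rightarrow> real" where
  "hit_prob A 0 x = (if x \<in> A then 1 else 0)"
| "hit_prob A (Suc n) x = (if x \<in> A then 1 else (\<Sum>e\<in>srw_steps. hit_prob A n (x + e)) / 4)"

definition exp_visits :: "(int \<times> int) set \<Rightarrow> nat \<Rightarrow> int \<times> int \<Rightarrow> real" where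
  "exp_visits A n x = (\<Sum>m\<le>n. \<Sum>y\<in>A. walk_kernel m (fst y - fst x) (snd y - snd x))"

lemma hit_prob_nonneg: "hit_prob A n x \<ge> 0"
  by (induction n arbitrary: x) (simp_all add: sum_nonneg)

lemma exp_visits_nonneg: "exp_visits A n x \<ge> 0"
  unfolding exp_visits_def by (intro sum_nonneg) (simp add: walk_kernel_nonneg)

lemma exp_visits_mono: "n \<le> n' \<Longrightarrow> exp_visits A n x \<le> exp_visits A n' x"
  unfolding exp_visits_def
  by (intro sum_mono2) (auto intro!: sum_nonneg simp: walk_kernel_nonneg)

lemma exp_visits_Suc:
  assumes "finite A"
  shows "exp_visits A (Suc n) x
    = (if x \<in> A then 1 else 0) + (\<Sum>e\<in>srw_steps. exp_visits A n (x + e)) / 4"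
proof -
  have at_0: "(\<Sum>y\<in>A. walk_kernel 0 (fst y - fst x) (snd y - snd x)) = (if x \<in> A then 1 else 0)"
  proof -
    have "(\<Sum>y\<in>A. walk_kernel 0 (fst y - fst x) (snd y - snd x)) = (\<Sum>y\<in>A. if y = x then 1 else 0)"
      by (intro sum.cong) (auto simp: walk_kernel_0 prod_eq_iff)
    also have "\<dots> = (if x \<in> A then 1 else 0)" using assms by (simp add: sum.delta')
    finally show ?thesis .
  qed
  have at_Suc: "(\<Sum>y\<in>A. walk_kernel (Suc m) (fst y - fst x) (snd y - snd x))
      = (\<Sum>e\<in>srw_steps. \<Sum>y\<in>A. walk_kernel m (fst y - fst (x + e)) (snd y - snd (x + e))) / 4"
    for m
  proof -
    have "(\<Sum>y\<in>A. walk_kernel (Suc m) (fst y - fst x) (snd y - snd x))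
       = (\<Sum>y\<in>A. (\<Sum>e\<in>srw_steps. walk_kernel m (fst y - fst (x + e)) (snd y - snd (x + e))) / 4)"
      by (intro sum.cong) (simp_all add: walk_kernel_Suc algebra_simps)
    also have "\<dots> = (\<Sum>e\<in>srw_steps. \<Sum>y\<in>A. walk_kernel m (fst y - fst (x + e)) (snd y - snd (x + e))) / 4"
      by (simp add: sum_divide_distrib[symmetric] sum.swap[of _ A])
    finally show ?thesis .
  qed
  have "exp_visits A (Suc n) x = (\<Sum>y\<in>A. walk_kernel 0 (fst y - fst x) (snd y - snd x)) +
      (\<Sum>m\<le>n. \<Sum>y\<in>A. walk_kernel (Suc m) (fst y - fst x) (snd y - snd x))"
    unfolding exp_visits_def by (rule sum.atMost_Suc_shift)
  also have "\<dots> = (if x \<in> A then 1 else 0) + (\<Sum>e\<in>srw_steps. exp_visits A n (x + e)) / 4"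
    unfolding at_0 at_Suc exp_visits_def
    by (simp add: sum_divide_distrib[symmetric] sum.swap[of _ "{..n}"])
  finally show ?thesis .
qed

text \<open>Stopping at the first visit: if from every point of A the walk makes at least g
  expected visits to A within j steps, then hitting A within n steps costs at least g
  visits within n + j steps.\<close>
lemma hit_prob_times_visits:
  assumes "finite A" "g \<ge> 0" "\<forall>y\<in>A. g \<le> exp_visits A j y"
  shows "hit_prob A n x * g \<le> exp_visits A (n + j) x"
proof (induction n arbitrary: x)
  case 0 then show ?case using assms exp_visits_nonneg[of A j x] by auto
next
  case (Suc n)
  show ?case
  proof (cases "x \<in> A")
    case True
    have "g \<le> exp_visits A j x" using assms True by auto
    also have "\<dots> \<le> exp_visits A (Suc n + j) x" by (rule exp_visits_mono) simp
    finally show ?thesis using True by simp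
  next
    case False
    have "hit_prob A (Suc n) x * g = (\<Sum>e\<in>srw_steps. hit_prob A n (x + e) * g) / 4"
      using False by (simp add: sum_distrib_right)
    also have "\<dots> \<le> (\<Sum>e\<in>srw_steps. exp_visits A (n + j) (x + e)) / 4"
      by (intro divide_right_mono sum_mono Suc.IH) simp
    also have "\<dots> = exp_visits A (Suc n + j) x"
      using exp_visits_Suc[OF assms(1), of "n + j" x] False by simp
    finally show ?thesis .
  qed
qed

lemma hit_prob_pos_reach:
  "hit_prob A n x > 0 \<Longrightarrow> \<exists>y\<in>A. \<bar>fst y - fst x\<bar> + \<bar>snd y - snd x\<bar> \<le> int n"
proof (induction n arbitrary: x)
  case 0
  then show ?case by (intro bexI[of _ x]) (auto split: if_splits)
next
  case (Suc n)
  show ?case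
  proof (cases "x \<in> A")
    case True then show ?thesis by (intro bexI[of _ x]) auto
  next
    case False
    have "(\<Sum>e\<in>srw_steps. hit_prob A n (x + e)) > 0" using Suc.prems False by simp
    then obtain e where e: "e \<in> srw_steps" "hit_prob A n (x + e) > 0"
      by (metis less_le_not_le sum_nonpos hit_prob_nonneg order_le_less)
    from Suc.IH[OF e(2)] obtain y where y: "y \<in> A"
      "\<bar>fst y - fst (x + e)\<bar> + \<bar>snd y - snd (x + e)\<bar> \<le> int n" by blast
    have "\<bar>fst e\<bar> + \<bar>snd e\<bar> = 1" using e(1) by (auto simp: srw_steps_def)
    hence "\<bar>fst y - fst x\<bar> + \<bar>snd y - snd x\<bar> \<le> int (Suc n)" using y(2) by simp
    thus ?thesis using y(1) by blast
  qed
qed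

section \<open>The law of the walk\<close>

lemma step_seqs_Suc: "step_seqs (Suc n) = (\<lambda>(e, xs). e # xs) ` (srw_steps \<times> step_seqs n)"
  unfolding step_seqs_def by (auto simp: length_Suc_conv)

lemma finite_step_seqs: "finite (step_seqs n)"
  using finite_lists_length_eq[of srw_steps n] unfolding step_seqs_def
  by (simp add: srw_steps_def conj_commute)

lemma card_step_seqs: "card (step_seqs n) = 4 ^ n"
proof -
  have "card {xs. set xs \<subseteq> srw_steps \<and> length xs = n} = card srw_steps ^ n"
    by (rule card_lists_length_eq) (simp add: srw_steps_def)
  moreover have "card srw_steps = 4" by (simp add: srw_steps_def)
  ultimately show ?thesis unfolding step_seqs_def by (simp add: conj_commute)
qed

lemma walk_pos_0: "walk_pos xs 0 = 0"
  by (simp add: walk_pos_def zero_prod_def)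

lemma walk_pos_Cons: "walk_pos (e # xs) (Suc m) = e + walk_pos xs m"
  by (simp add: walk_pos_def plus_prod_def)

definition hitting_seqs :: "(int \<times> int) set \<Rightarrow> nat \<Rightarrow> int \<times> int \<Rightarrow> (int \<times> int) list set" where
  "hitting_seqs A n x = {xs \<in> step_seqs n. \<exists>m\<le>n. x + walk_pos xs m \<in> A}"

lemma hitting_seqs_Suc:
  assumes "x \<notin> A"
  shows "hitting_seqs A (Suc n) x
    = (\<lambda>(e, xs). e # xs) ` (SIGMA e:srw_steps. hitting_seqs A n (x + e))"
proof (intro set_eqI iffI)
  fix ys
  assume "ys \<in> hitting_seqs A (Suc n) x"
  then obtain m where ys: "ys \<in> step_seqs (Suc n)" "m \<le> Suc n" "x + walk_pos ys m \<in> A"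
    by (auto simp: hitting_seqs_def)
  then obtain e xs where exs: "ys = e # xs" "e \<in> srw_steps" "xs \<in> step_seqs n"
    unfolding step_seqs_Suc by auto
  have "m \<noteq> 0" using ys(3) assms by (metis walk_pos_0 add_0_right)
  then obtain m' where m: "m = Suc m'" by (cases m) auto
  have "(x + e) + walk_pos xs m' \<in> A" using ys(3) by (simp add: exs m walk_pos_Cons add.assoc)
  thus "ys \<in> (\<lambda>(e, xs). e # xs) ` (SIGMA e:srw_steps. hitting_seqs A n (x + e))"
    using exs ys(2) m by (auto simp: hitting_seqs_def)
next
  fix ys
  assume "ys \<in> (\<lambda>(e, xs). e # xs) ` (SIGMA e:srw_steps. hitting_seqs A n (x + e))"
  then obtain e xs m where exs: "ys = e # xs" "e \<in> srw_steps" "xs \<in> step_seqs n"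
    and m: "m \<le> n" "(x + e) + walk_pos xs m \<in> A"
    by (auto simp: hitting_seqs_def)
  have "ys \<in> step_seqs (Suc n)" unfolding step_seqs_Suc using exs by auto
  moreover have "x + walk_pos ys (Suc m) \<in> A" using m by (simp add: exs walk_pos_Cons add.assoc)
  ultimately show "ys \<in> hitting_seqs A (Suc n) x" using m unfolding hitting_seqs_def by auto
qed

lemma card_hitting_seqs: "real (card (hitting_seqs A n x)) = 4 ^ n * hit_prob A n x"
proof (induction n arbitrary: x)
  case 0
  have "step_seqs 0 = {[]}" by (auto simp: step_seqs_def)
  then show ?case by (simp add: hitting_seqs_def walk_pos_0)
next
  case (Suc n)
  show ?case
  proof (cases "x \<in> A")
    case True
    have "hitting_seqs A (Suc n) x = step_seqs (Suc n)"
      using True by (auto simp: hitting_seqs_def walk_pos_0 intro: exI[of _ 0])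
    then show ?thesis using True by (simp add: card_step_seqs)
  next
    case False
    have inj: "inj_on (\<lambda>(e, xs). e # xs) (SIGMA e:srw_steps. hitting_seqs A n (x + e))"
      by (auto simp: inj_on_def)
    have fin: "finite (hitting_seqs A n y)" for y
      using finite_step_seqs[of n] by (auto simp: hitting_seqs_def)
    have "card (hitting_seqs A (Suc n) x) = (\<Sum>e\<in>srw_steps. card (hitting_seqs A n (x + e)))"
      unfolding hitting_seqs_Suc[OF False] card_image[OF inj]
      by (rule card_SigmaI) (auto simp: fin srw_steps_def)
    hence "real (card (hitting_seqs A (Suc n) x)) = (\<Sum>e\<in>srw_steps. 4 ^ n * hit_prob A n (x + e))"
      by (simp add: Suc.IH)
    then show ?thesis using False by (simp add: sum_distrib_left[symmetric])
  qed
qed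

lemma prob_range_meets:
  "measure_pmf.prob (srw_law n) {xs. walk_range xs n \<inter> A \<noteq> {}} = hit_prob A n 0"
proof -
  have "replicate n (1, 0) \<in> step_seqs n" by (auto simp: step_seqs_def srw_steps_def)
  hence ne: "step_seqs n \<noteq> {}" by auto
  have eq: "step_seqs n \<inter> {xs. walk_range xs n \<inter> A \<noteq> {}} = hitting_seqs A n 0"
    by (auto simp: hitting_seqs_def walk_range_def)
  have "measure_pmf.prob (srw_law n) {xs. walk_range xs n \<inter> A \<noteq> {}}
     = real (card (hitting_seqs A n 0)) / real (card (step_seqs n))"
    unfolding srw_law_def measure_pmf_of_set[OF ne finite_step_seqs] eq ..
  also have "\<dots> = hit_prob A n 0" by (simp add: card_hitting_seqs card_step_seqs)
  finally show ?thesis .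
qed

lemma square_mem: "y \<in> square z k \<longleftrightarrow> \<bar>fst y - fst z\<bar> \<le> int k \<and> \<bar>snd y - snd z\<bar> \<le> int k"
proof
  assume "\<bar>fst y - fst z\<bar> \<le> int k \<and> \<bar>snd y - snd z\<bar> \<le> int k"
  moreover have "y = (fst z + (fst y - fst z), snd z + (snd y - snd z))" by simp
  ultimately show "y \<in> square z k"
    unfolding square_def by (intro CollectI exI[of _ "fst y - fst z"] exI[of _ "snd y - snd z"]) auto
qed (auto simp: square_def)

lemma finite_square: "finite (square z k)"
proof (rule finite_subset)
  show "square z k \<subseteq> (\<lambda>(j, j'). (fst z + j, snd z + j')) ` ({- int k..int k} \<times> {- int k..int k})"
    by (auto simp: square_def)
qed auto

lemma card_square_pos: "card (square z k) > 0"
proof -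
  have "z \<in> square z k" by (simp add: square_mem)
  with finite_square show ?thesis by (metis card_gt_0_iff empty_iff)
qed

lemma square_far:
  assumes y: "y \<in> square z k" and kn: "real k ^ 2 \<le> real n" and Z: "znorm z \<ge> 5 * sqrt (real n)"
  shows "real_of_int (fst y) ^ 2 + real_of_int (snd y) ^ 2 \<ge> 49/100 * znorm z ^ 2"
proof -
  define Zv where "Zv = znorm z"
  have Z0: "Zv \<ge> 0" using Z unfolding Zv_def by (smt (verit) real_sqrt_ge_zero of_nat_0_le_iff)
  have "(5 * sqrt (real n)) ^ 2 \<le> Zv ^ 2" using Z unfolding Zv_def by (intro power_mono) auto
  hence Zn: "Zv ^ 2 \<ge> 25 * real n" by (simp add: power_mult_distrib)
  define j where "j = real_of_int (fst z - fst y)"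
  define j' where "j' = real_of_int (snd z - snd y)"
  have "\<bar>fst z - fst y\<bar> \<le> int k" "\<bar>snd z - snd y\<bar> \<le> int k"
    using y unfolding square_mem by (simp_all add: abs_minus_commute)
  hence "\<bar>j\<bar> \<le> real k" "\<bar>j'\<bar> \<le> real k" unfolding j_def j'_def by linarith+
  hence "j ^ 2 \<le> real k ^ 2" "j' ^ 2 \<le> real k ^ 2"
    using abs_le_square_iff[of j "real k"] abs_le_square_iff[of j' "real k"] by simp_all
  hence "j ^ 2 + j' ^ 2 \<le> (3/10 * Zv) ^ 2" using kn Zn by (simp add: power2_eq_square)
  hence D: "sqrt (j ^ 2 + j' ^ 2) \<le> 3/10 * Zv"
    using Z0 real_sqrt_le_mono by fastforce
  define Y where "Y = sqrt (real_of_int (fst y) ^ 2 + real_of_int (snd y) ^ 2)"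
  have "Zv = sqrt ((real_of_int (fst y) + j) ^ 2 + (real_of_int (snd y) + j') ^ 2)"
    by (simp add: Zv_def znorm_def j_def j'_def)
  also have "\<dots> \<le> Y + sqrt (j ^ 2 + j' ^ 2)"
    unfolding Y_def by (rule real_sqrt_sum_squares_triangle_ineq)
  finally have "7/10 * Zv \<le> Y" using D by simp
  hence "(7/10 * Zv) ^ 2 \<le> Y ^ 2" using Z0 by (intro power_mono) auto
  thus ?thesis unfolding Y_def Zv_def by (simp add: power2_eq_square)
qed

section \<open>Visits to the square\<close>

lemma sum_pairs: "(\<Sum>m<2*N. g m) = (\<Sum>l<N. g (2*l) + g (2*l+1))" for g :: "nat \<Rightarrow> real"
  by (induction N) (simp_all add: algebra_simps)

lemma harmonic_ge_ln: "(\<Sum>l\<in>{L..<L'}. 1 / (real l + 1)) \<ge> ln (real L' + 1) - ln (real L + 1)"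
proof (induction L')
  case (Suc L')
  show ?case
  proof (cases "L \<le> L'")
    case True
    have pr: "(real L' + 1) * (1 + 1 / (real L' + 1)) = real (Suc L') + 1"
      by (simp add: field_simps)
    have "ln (real (Suc L') + 1) = ln (real L' + 1) + ln (1 + 1 / (real L' + 1))"
      unfolding pr[symmetric] by (rule ln_mult_pos) (auto simp: add_pos_pos)
    moreover have "ln (1 + 1 / (real L' + 1)) \<le> 1 / (real L' + 1)"
      by (rule ln_add_one_self_le_self) simp
    ultimately show ?thesis using Suc.IH True by simp
  next
    case False
    then show ?thesis by simp
  qed
qed simp

text \<open>If 8|(a,b)|^2 <= 2L, then for each l >= L one of the times 2l, 2l+1 has the right parity
  and S is at (a,b) then with probability at least 1/(16(l+1)); summing over l gives a
  harmonic lower bound on the expected number of visits to (a,b).\<close>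
lemma visits_point_lower:
  assumes "8 * (a ^ 2 + b ^ 2) \<le> 2 * int L" "2 * L' \<le> n + 1"
  shows "(\<Sum>m\<le>n. walk_kernel m a b) \<ge> (\<Sum>l\<in>{L..<L'}. 1 / (16 * (real l + 1)))"
proof -
  have pair: "walk_kernel (2*l) a b + walk_kernel (2*l+1) a b \<ge> 1 / (16 * (real l + 1))"
    if "l \<ge> L" for l
  proof (cases "even (int (2*l) + a + b)")
    case True
    have "walk_kernel (2*l) a b \<ge> 1 / (8 * (real (2*l) + 1))"
      using True assms(1) that by (intro walk_kernel_lower) auto
    moreover have "1 / (16 * (real l + 1)) \<le> 1 / (8 * (real (2*l) + 1))" by (simp add: divide_simps)
    ultimately show ?thesis using walk_kernel_nonneg[of "2*l+1" a b] by linarith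
  next
    case False
    hence "walk_kernel (2*l+1) a b \<ge> 1 / (8 * (real (2*l+1) + 1))"
      using assms(1) that by (intro walk_kernel_lower) auto
    moreover have "1 / (16 * (real l + 1)) = 1 / (8 * (real (2*l+1) + 1))" by simp
    ultimately show ?thesis using walk_kernel_nonneg[of "2*l" a b] by linarith
  qed
  have "(\<Sum>l\<in>{L..<L'}. 1 / (16 * (real l + 1)))
      \<le> (\<Sum>l\<in>{L..<L'}. walk_kernel (2*l) a b + walk_kernel (2*l+1) a b)"
    by (intro sum_mono pair) auto
  also have "\<dots> \<le> (\<Sum>l<L'. walk_kernel (2*l) a b + walk_kernel (2*l+1) a b)"
    by (intro sum_mono2) (auto simp: walk_kernel_nonneg add_nonneg_nonneg)
  also have "\<dots> = (\<Sum>m<2*L'. walk_kernel m a b)" by (rule sum_pairs[symmetric])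
  also have "\<dots> \<le> (\<Sum>m\<le>n. walk_kernel m a b)"
    using assms(2) by (intro sum_mono2) (auto simp: walk_kernel_nonneg)
  finally show ?thesis .
qed

definition square_harmonic :: "nat \<Rightarrow> nat \<Rightarrow> real" where
  "square_harmonic k n = (\<Sum>l\<in>{32*k^2..<(n+1) div 2}. 1 / (16 * (real l + 1)))"

text \<open>Every pair of points of Q(z,k) is at distance at most 2 sqrt 2 k, so from any point of
  the square each of its points is visited about ln n times by time n.\<close>
lemma exp_visits_square_lower:
  assumes "y \<in> square z k"
  shows "exp_visits (square z k) n y \<ge> real (card (square z k)) * square_harmonic k n"
proof -
  have pt: "square_harmonic k n \<le> (\<Sum>m\<le>n. walk_kernel m (fst y' - fst y) (snd y' - snd y))"
    if "y' \<in> square z k" for y'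
  proof -
    define a where "a = fst y' - fst y"
    define b where "b = snd y' - snd y"
    have "\<bar>a\<bar> \<le> 2 * int k" "\<bar>b\<bar> \<le> 2 * int k"
      using assms that unfolding square_mem a_def b_def by linarith+
    hence "a ^ 2 \<le> (2 * int k) ^ 2" "b ^ 2 \<le> (2 * int k) ^ 2"
      using abs_le_square_iff[of a "2 * int k"] abs_le_square_iff[of b "2 * int k"] by simp_all
    hence "8 * (a ^ 2 + b ^ 2) \<le> 2 * int (32 * k ^ 2)" by (simp add: power2_eq_square)
    moreover have "2 * ((n + 1) div 2) \<le> n + 1" by simp
    ultimately show ?thesis
      unfolding square_harmonic_def a_def[symmetric] b_def[symmetric] by (rule visits_point_lower)
  qed
  have "exp_visits (square z k) n y
      = (\<Sum>y'\<in>square z k. \<Sum>m\<le>n. walk_kernel m (fst y' - fst y) (snd y' - snd y))"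
    unfolding exp_visits_def by (rule sum.swap)
  also have "\<dots> \<ge> (\<Sum>y'\<in>square z k. square_harmonic k n)" by (intro sum_mono pt)
  finally show ?thesis by simp
qed

lemma square_harmonic_ge_ln:
  assumes n: "real n \<ge> 66 ^ 4" and ks: "real k ^ 2 \<le> sqrt (real n)"
  shows "square_harmonic k n \<ge> ln (real n) / 64"
proof -
  have n1: "real n \<ge> 1" using n by simp
  have s1: "sqrt (real n) \<ge> 1" using n1 by simp
  have "2 * ((n + 1) div 2) \<ge> n" by simp
  hence "real ((n + 1) div 2) + 1 \<ge> real n / 2" by linarith
  hence "ln (real n / 2) \<le> ln (real ((n + 1) div 2) + 1)" using n1 by simp
  moreover have "ln (real n / 2) = ln (real n) - ln 2" using n1 by (simp add: ln_div)
  moreover have "ln (real (32 * k ^ 2) + 1) \<le> ln (33 * sqrt (real n))"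
  proof -
    have "real (32 * k ^ 2) = 32 * real k ^ 2" by simp
    hence "real (32 * k ^ 2) + 1 \<le> 33 * sqrt (real n)" using ks s1 by linarith
    moreover have "real (32 * k ^ 2) + 1 > 0" by (intro add_nonneg_pos) auto
    moreover have "33 * sqrt (real n) > 0" using s1 by simp
    ultimately show ?thesis by (simp only: ln_le_cancel_iff)
  qed
  moreover have "ln (33 * sqrt (real n)) = ln 33 + ln (real n) / 2"
    using n1 by (simp add: ln_mult ln_sqrt)
  moreover have "ln (66::real) = ln 2 + ln 33" using ln_mult_pos[of 2 33] by simp
  moreover have "ln (real n) \<ge> 4 * ln 66"
  proof -
    have "ln ((66::real) ^ 4) \<le> ln (real n)" using n by simp
    moreover have "ln ((66::real) ^ 4) = 4 * ln 66" by (simp only: ln_realpow of_nat_numeral)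
    ultimately show ?thesis by linarith
  qed
  ultimately have "ln (real ((n + 1) div 2) + 1) - ln (real (32 * k ^ 2) + 1) \<ge> ln (real n) / 4"
    by linarith
  moreover have "square_harmonic k n = (\<Sum>l\<in>{32*k^2..<(n+1) div 2}. 1 / (real l + 1)) / 16"
    unfolding square_harmonic_def sum_divide_distrib by (intro sum.cong) auto
  ultimately show ?thesis using harmonic_ge_ln[where L="32*k^2" and L'="(n+1) div 2"] by linarith
qed

text \<open>Half of
  the Gaussian pays for the factor N/M, the other half gives the claimed decay.\<close>
lemma heat_kernel_term_bound:
  fixes M N Y Z :: real
  assumes M: "0 < M" "M \<le> 3 * N" and Y: "Y \<ge> 49/100 * Z ^ 2" and Zn: "Z ^ 2 \<ge> 25 * N"
  shows "4 / M * exp (- Y / (4 * M)) \<le> 4 / N * exp (- (Z ^ 2) / (72 * N))"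
proof -
  have N0: "N > 0" using M by linarith
  have Y0: "Y \<ge> 0" using Y zero_le_power2[of Z] by linarith
  have decay: "Z ^ 2 / (72 * N) \<le> Y / (8 * M)"
  proof -
    have "Z ^ 2 * (8 * M) \<le> Z ^ 2 * (24 * N)" using M by (intro mult_left_mono) auto
    also have "\<dots> \<le> (100 / 49 * Y) * (24 * N)" using Y N0 by (intro mult_right_mono) auto
    also have "\<dots> \<le> Y * (72 * N)" using Y0 N0 by simp
    finally show ?thesis using M N0 by (simp add: divide_simps mult_ac)
  qed
  have ratio: "N / M \<le> Y / (8 * M)" using Y Zn M by (simp add: divide_simps)
  have half: "exp (- (Y / (8 * M))) \<le> M / N"
  proof -
    have "N / M \<le> exp (N / M)" using exp_ge_add_one_self[of "N / M"] by linarith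
    hence "1 / exp (N / M) \<le> 1 / (N / M)" using N0 M by (intro divide_left_mono) auto
    hence "exp (- (N / M)) \<le> M / N" by (simp add: exp_minus inverse_eq_divide)
    moreover have "exp (- (Y / (8 * M))) \<le> exp (- (N / M))" using ratio by simp
    ultimately show ?thesis by linarith
  qed
  have "exp (- Y / (4 * M)) = exp (- (Y / (8 * M))) * exp (- (Y / (8 * M)))"
    using M by (simp add: exp_add[symmetric] field_simps)
  also have "\<dots> \<le> exp (- (Z ^ 2 / (72 * N))) * (M / N)"
    using decay half by (intro mult_mono) auto
  finally have "4 / M * exp (- Y / (4 * M)) \<le> 4 / M * (exp (- (Z ^ 2 / (72 * N))) * (M / N))"
    using M by (intro mult_left_mono) auto
  also have "\<dots> = 4 / N * exp (- (Z ^ 2) / (72 * N))" using M by simp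
  finally show ?thesis .
qed

text \<open>Up to time 2n the origin-started walk spends in Q(z,k) at most 12 |Q| exp(-|z|^2/(72n))
  expected visits, since every point of the square is far from the origin.\<close>
lemma exp_visits_square_upper:
  assumes n1: "n \<ge> 1" and kn: "real k ^ 2 \<le> real n" and Z: "znorm z \<ge> 5 * sqrt (real n)"
  shows "exp_visits (square z k) (2 * n) 0
    \<le> real (card (square z k)) * (12 * exp (- (znorm z ^ 2) / (72 * real n)))"
proof -
  define Q where "Q = square z k"
  define E where "E = exp (- (znorm z ^ 2) / (72 * real n))"
  have "(5 * sqrt (real n)) ^ 2 \<le> znorm z ^ 2"
    using Z by (intro power_mono) auto
  hence Zn: "znorm z ^ 2 \<ge> 25 * real n" by (simp add: power_mult_distrib)
  have pointwise: "walk_kernel m (fst y) (snd y) \<le> 4 / real n * E" if "y \<in> Q" "m \<le> 2 * n" for y m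
  proof -
    have "walk_kernel m (fst y) (snd y) \<le> 4 / (real m + 1) *
        exp (- (real_of_int (fst y) ^ 2 + real_of_int (snd y) ^ 2) / (4 * (real m + 1)))"
      by (rule walk_kernel_gauss)
    also have "\<dots> \<le> 4 / real n * E"
      unfolding E_def using square_far[OF _ kn Z, of y] that n1 Zn unfolding Q_def
      by (intro heat_kernel_term_bound) auto
    finally show ?thesis .
  qed
  have "exp_visits Q (2 * n) 0 = (\<Sum>m\<le>2*n. \<Sum>y\<in>Q. walk_kernel m (fst y) (snd y))"
    unfolding exp_visits_def by simp
  also have "\<dots> \<le> (\<Sum>m\<le>2*n. \<Sum>y\<in>Q. 4 / real n * E)" by (intro sum_mono pointwise) auto
  also have "\<dots> = ((2 * real n + 1) * (4 / real n)) * (real (card Q) * E)" by simp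
  also have "\<dots> \<le> 12 * (real (card Q) * E)"
    using n1 by (intro mult_right_mono) (auto simp: E_def divide_simps)
  finally show ?thesis by (simp add: Q_def E_def mult_ac)
qed

lemma sqrt_le_self: "x \<ge> 1 \<Longrightarrow> sqrt x \<le> (x::real)"
  using mult_left_mono[of 1 "sqrt x" "sqrt x"] by simp

lemma hit_square_large_n:
  assumes n: "real n \<ge> 66 ^ 4" and ks: "real k ^ 2 \<le> sqrt (real n)"
    and Z: "znorm z \<ge> 5 * sqrt (real n)"
  shows "hit_prob (square z k) n 0 * ln (real n) \<le> 768 * exp (- (znorm z ^ 2) / (72 * real n))"
proof -
  define Q where "Q = square z k"
  define E where "E = exp (- (znorm z ^ 2) / (72 * real n))"
  define H where "H = square_harmonic k n"
  have n1: "n \<ge> 1" using n by simp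
  have "sqrt (real n) \<le> real n" using n1 by (simp add: sqrt_le_self)
  hence kn: "real k ^ 2 \<le> real n" using ks by linarith
  have H: "H \<ge> ln (real n) / 64" unfolding H_def using n ks by (rule square_harmonic_ge_ln)
  have "hit_prob Q n 0 * (real (card Q) * H) \<le> exp_visits Q (n + n) 0"
  proof (rule hit_prob_times_visits)
    show "finite Q" "\<forall>y\<in>Q. real (card Q) * H \<le> exp_visits Q n y"
      unfolding Q_def H_def by (auto intro: finite_square exp_visits_square_lower)
    show "0 \<le> real (card Q) * H"
      unfolding H_def square_harmonic_def by (intro mult_nonneg_nonneg sum_nonneg) auto
  qed
  also have "\<dots> \<le> real (card Q) * (12 * E)"
    unfolding Q_def E_def mult_2[symmetric] using n1 kn Z by (rule exp_visits_square_upper)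
  finally have "hit_prob Q n 0 * H \<le> 12 * E"
    using card_square_pos[of z k] unfolding Q_def by (simp add: mult_ac)
  moreover have "hit_prob Q n 0 * (ln (real n) / 64) \<le> hit_prob Q n 0 * H"
    using H hit_prob_nonneg by (rule mult_left_mono)
  ultimately show ?thesis unfolding Q_def E_def by linarith
qed

text \<open>The square can only be hit within n steps if it lies within l1-distance n, which
  forces |z| <= 3n when k <= n.\<close>
lemma hit_square_pos_near:
  assumes "hit_prob (square z k) n 0 > 0" "k \<le> n"
  shows "znorm z \<le> 3 * real n"
proof -
  obtain y where y: "y \<in> square z k" "\<bar>fst y\<bar> + \<bar>snd y\<bar> \<le> int n"
    using hit_prob_pos_reach[OF assms(1)] by auto
  hence "\<bar>fst z\<bar> + \<bar>snd z\<bar> \<le> 3 * int n" using assms(2) unfolding square_mem by linarith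
  hence "\<bar>real_of_int (fst z)\<bar> + \<bar>real_of_int (snd z)\<bar> \<le> 3 * real n" by linarith
  moreover have "znorm z \<le> \<bar>real_of_int (fst z)\<bar> + \<bar>real_of_int (snd z)\<bar>"
    unfolding znorm_def by (rule sqrt_sum_squares_le_sum_abs)
  ultimately show ?thesis by linarith
qed

lemma log2_le_twice: assumes "x \<ge> 1" shows "log 2 x \<le> 2 * ln x"
proof -
  have "exp (1/2) \<le> exp (ln (2::real))" using exp_half_le2 by simp
  hence "ln (2::real) \<ge> 1/2" by (simp only: exp_le_cancel_iff)
  hence "ln x / ln 2 \<le> ln x / (1/2)" using assms by (intro divide_left_mono) auto
  thus ?thesis by (simp add: log_def)
qed

lemma bounded_n_bound_ge_1:
  assumes "n \<ge> 2" "real n \<le> N" "znorm z \<le> 3 * real n"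
  shows "1 \<le> 2 * N * exp N / log 2 (real n) * exp (- (1/72) * znorm z ^ 2 / real n)"
proof -
  define e where "e = exp (- (1/72) * znorm z ^ 2 / real n)"
  have n: "real n \<ge> 2" using assms(1) by simp
  have "znorm z ^ 2 \<le> (3 * real n) ^ 2"
    using assms(3) by (intro power_mono) (auto simp: znorm_def)
  hence "znorm z ^ 2 / real n \<le> 9 * real n" using n by (simp add: divide_simps power2_eq_square)
  hence "(1/72) * znorm z ^ 2 / real n \<le> N" using assms(2) n by linarith
  hence "exp N * e \<ge> 1" by (simp add: e_def exp_add[symmetric])
  hence "2 * N \<le> 2 * N * (exp N * e)" using assms(2) n by simp
  moreover have "log 2 (real n) \<le> 2 * N"
    using log2_le_twice[of "real n"] ln_le_minus_one[of "real n"] n assms(2) by simp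
  ultimately have "log 2 (real n) \<le> 2 * N * (exp N * e)" by linarith
  moreover have "log 2 (real n) > 0" using n by simp
  ultimately have "1 \<le> 2 * N * (exp N * e) / log 2 (real n)" by (simp add: le_divide_eq)
  thus ?thesis by (simp add: e_def)
qed

definition hit_const :: real where
  "hit_const = 2 * 66 ^ 4 * exp (66 ^ 4)"

lemma hit_const_ge: "1536 \<le> hit_const"
proof -
  have "(1536::real) \<le> 2 * 66^4 * 1" by simp
  also have "\<dots> \<le> hit_const" unfolding hit_const_def by (rule mult_left_mono) simp_all
  finally show ?thesis .
qed

lemma hit_square_bound:
  assumes n: "n \<ge> 2" and ks: "real k ^ 2 \<le> sqrt (real n)" and Z: "znorm z \<ge> 5 * sqrt (real n)"
  shows "hit_prob (square z k) n 0
    \<le> hit_const / log 2 (real n) * exp (- (1/72) * znorm z ^ 2 / real n)"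
proof (cases "real n \<ge> 66 ^ 4")
  case True
  define P where "P = hit_prob (square z k) n 0"
  define E where "E = exp (- (1/72) * znorm z ^ 2 / real n)"
  have lg: "0 < log 2 (real n)" "log 2 (real n) \<le> 2 * ln (real n)"
    using n log2_le_twice[of "real n"] by simp_all
  have "P * ln (real n) \<le> 768 * E"
    using hit_square_large_n[OF True ks Z] by (simp add: P_def E_def)
  moreover have "P * log 2 (real n) \<le> P * (2 * ln (real n))"
    using lg(2) hit_prob_nonneg unfolding P_def by (rule mult_left_mono)
  moreover have "1536 * E \<le> hit_const * E"
    using hit_const_ge by (simp add: E_def)
  ultimately have "P * log 2 (real n) \<le> hit_const * E" by linarith
  hence "P \<le> hit_const * E / log 2 (real n)" using lg by (simp add: le_divide_eq)
  thus ?thesis by (simp add: P_def E_def)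
next
  case False
  show ?thesis
  proof (cases "hit_prob (square z k) n 0 > 0")
    case True
    have "sqrt (real n) \<le> real n" using n by (simp add: sqrt_le_self)
    moreover have "real k \<le> real k ^ 2"
    proof -
      have "real k \<le> real (k * k)" using le_square[of k] by (simp only: of_nat_le_iff)
      thus ?thesis by (simp add: power2_eq_square)
    qed
    ultimately have "real k \<le> real n" using ks by linarith
    hence "k \<le> n" by simp
    hence "znorm z \<le> 3 * real n" using hit_square_pos_near[OF True] by simp
    hence "1 \<le> hit_const / log 2 (real n) * exp (- (1/72) * znorm z ^ 2 / real n)"
      unfolding hit_const_def using n False by (intro bounded_n_bound_ge_1) auto
    moreover have "hit_prob (square z k) n 0 \<le> 1"
      using measure_pmf.prob_le_1 prob_range_meets by metis
    ultimately show ?thesis by linarith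
  next
    case False
    hence "hit_prob (square z k) n 0 = 0" using hit_prob_nonneg by (metis order_le_less)
    moreover have "log 2 (real n) > 0" using n by simp
    ultimately show ?thesis by (simp add: hit_const_def)
  qed
qed

lemma sq_le_sqrt_of_le_root4:
  assumes "real k \<le> root 4 x" "x \<ge> 0"
  shows "real k ^ 2 \<le> sqrt x"
proof (rule real_le_rsqrt)
  have "real k ^ 4 \<le> root 4 x ^ 4" using assms(1) by (intro power_mono) auto
  thus "(real k ^ 2) ^ 2 \<le> x" using assms(2) by (simp add: power_mult[symmetric])
qed

theorem mainTheorem10:
  shows "\<exists>c C :: real. c > 0 \<and> C > 0 \<and>
    (\<forall>(n::nat) (k::nat) (z::int \<times> int).
       n \<ge> 2 \<longrightarrow> real k \<le> root 4 (real n) \<longrightarrow> znorm z \<ge> 5 * sqrt (real n) \<longrightarrow>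
       measure_pmf.prob (srw_law n) {xs. walk_range xs n \<inter> square z k \<noteq> {}}
         \<le> C / log 2 (real n) * exp (- c * znorm z ^ 2 / real n))"
proof (intro exI conjI allI impI)
  show "(1/72 :: real) > 0" by simp
  show "hit_const > 0" using hit_const_ge by simp
  fix n k :: nat and z :: "int \<times> int"
  assume "n \<ge> 2" "real k \<le> root 4 (real n)" "znorm z \<ge> 5 * sqrt (real n)"
  moreover from this(2) have "real k ^ 2 \<le> sqrt (real n)" by (rule sq_le_sqrt_of_le_root4) simp
  ultimately show "measure_pmf.prob (srw_law n) {xs. walk_range xs n \<inter> square z k \<noteq> {}}
      \<le> hit_const / log 2 (real n) * exp (- (1/72) * znorm z ^ 2 / real n)"
    unfolding prob_range_meets by (intro hit_square_bound)
qed

end
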